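(* Let $g$ be a non-constant entire function of finite order $\rho\ge0$ whose Taylor coefficients are all non-negative, and let $f=e^g$. Let $(X_t)_{t\ge0}$ be the Khinchin family of $f$ and $\breve{X}_t$ its normalization, and let $Z$ be a standard normal random variable. Then $$\lim_{t\to\infty}\mathbf{E}(\breve{X}_t^m)=\mathbf{E}(Z^m)\quad\text{for every integer } m\ge1.$$
   Context: Such $f=\sum_n a_nz^n$ is entire, with $a_n\ge0$ and $a_0=e^{g(0)}>0$. For $t>0$, $X_t$ is the random variable with $\mathbf{P}(X_t=n)=a_nt^n/f(t)$, $n\ge0$. With $m_f(t)=\mathbf{E}(X_t)$ and $\sigma_f^2(t)=\mathbf{V}(X_t)>0$, the normalization is $\breve{X}_t=(X_t-m_f(t))/\sigma_f(t)$. The order of an entire function $g$ is $\limsup_{r\to\infty}\frac{\ln\ln\max_{|z|=r}|g(z)|}{\ln r}$. *)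

theory Defs
  imports "HOL-Complex_Analysis.Complex_Analysis" "HOL-Probability.Probability"
begin

definition taylor_coeff :: "(complex \<Rightarrow> complex) \<Rightarrow> nat \<Rightarrow> complex" where
  "taylor_coeff h n = (deriv ^^ n) h 0 / of_nat (fact n)"

definition entire_order :: "(complex \<Rightarrow> complex) \<Rightarrow> ereal" where
  "entire_order h = Limsup at_top
     (\<lambda>r::real. ereal (ln (ln (Sup ((\<lambda>z. norm (h z)) ` sphere 0 r))) / ln r))"

text \<open>Khinchin family of a power series f = sum a_n z^n with a_n >= 0:
  P(X_t = n) = a_n t^n / f(t).\<close>
definition khinchin_prob :: "(complex \<Rightarrow> complex) \<Rightarrow> real \<Rightarrow> nat \<Rightarrow> real" where
  "khinchin_prob f t n = Re (taylor_coeff f n) * t ^ n / Re (f (of_real t))"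

definition khinchin_mean :: "(complex \<Rightarrow> complex) \<Rightarrow> real \<Rightarrow> real" where
  "khinchin_mean f t = (\<Sum>n. real n * khinchin_prob f t n)"

definition khinchin_var :: "(complex \<Rightarrow> complex) \<Rightarrow> real \<Rightarrow> real" where
  "khinchin_var f t = (\<Sum>n. (real n - khinchin_mean f t)^2 * khinchin_prob f t n)"

definition khinchin_norm_moment :: "(complex \<Rightarrow> complex) \<Rightarrow> real \<Rightarrow> nat \<Rightarrow> real" where
  "khinchin_norm_moment f t k =
     (\<Sum>n. ((real n - khinchin_mean f t) / sqrt (khinchin_var f t)) ^ k * khinchin_prob f t n)"

end

theory Submission
  imports Defs "HOL-Real_Asymp.Real_Asymp"
begin

(* The moment generating function of (X_t - m(t)) / sigma(t) is exp (cgf t theta), where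
   cgf t theta = g (t e^(theta/sigma)) - g t - theta m / sigma. Since g has non-negative
   coefficients beta_n, m = sum n beta_n t^n and sigma^2 = sum n^2 beta_n t^n, so expanding
   e^(theta n/sigma) to second order gives, on the unit disc,
     |cgf t theta - theta^2/2| <= R t := sum beta_n t^n (n/sigma)^3 e^(n/sigma).
   Cauchy's estimate on the unit circle then bounds the distance of the k-th moment from the k-th
   derivative of exp (theta^2/2) at 0, the k-th normal moment, by k! e^(1/2) R e^R.
   To see R t --> 0, split at n = eps sigma: small n contribute at most eps e^eps, large n at most
   e^(-eps sigma) g (e^5 t). Finite order gives ln g r <= r^K, whereas sigma t^2 >= beta_n t^n for
   every n >= 1; hence ln g (e^5 t) = o(sigma t), with a separate (easier) argument when g is a
   polynomial. *)

section \<open>Moments of the standard normal distribution\<close>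

lemma std_normal_moment_Suc_Suc:
  "integral\<^sup>L lborel (\<lambda>x. std_normal_density x * x ^ (k + 2)) =
     (k + 1) * integral\<^sup>L lborel (\<lambda>x. std_normal_density x * x ^ k)"
proof (cases "even k")
  case True
  then obtain j where k: "k = 2 * j" by blast
  have "fact (2 * (j + 1)) = (2 * real j + 2) * (2 * real j + 1) * fact (2 * j)"
    by (simp add: algebra_simps)
  moreover have "fact (j + 1) = (real j + 1) * fact j"
    by simp
  moreover have "(real j + 1) * fact j * 2 ^ j \<noteq> 0"
    by (simp add: add_nonneg_eq_0_iff)
  ultimately have "fact (2 * (j + 1)) / (2 ^ (j + 1) * fact (j + 1)) =
        (2 * real j + 1) * (fact (2 * j) / (2 ^ j * fact j) :: real)"
    by (simp add: field_simps)
  then show ?thesis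
    using integral_std_normal_moment_even[of j] integral_std_normal_moment_even[of "j + 1"]
    by (simp add: k algebra_simps)
next
  case False
  then obtain j where k: "k = 2 * j + 1" using oddE by blast
  show ?thesis
    using integral_std_normal_moment_odd[of j] integral_std_normal_moment_odd[of "j + 1"]
    by (simp add: k algebra_simps)
qed

definition std_normal_mgf :: "complex \<Rightarrow> complex" where
  "std_normal_mgf \<theta> = exp (\<theta>\<^sup>2 / 2)"

lemma std_normal_mgf_has_field_derivative:
  "(std_normal_mgf has_field_derivative \<theta> * std_normal_mgf \<theta>) (at \<theta>)"
  unfolding std_normal_mgf_def by (auto intro!: derivative_eq_intros simp: power2_eq_square)

lemma holomorphic_std_normal_mgf: "std_normal_mgf holomorphic_on A"
  using std_normal_mgf_has_field_derivative
  by (meson field_differentiable_def field_differentiable_at_within holomorphic_on_def)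

lemma higher_deriv_std_normal_mgf_0:
  "(deriv ^^ k) std_normal_mgf 0 = of_real (integral\<^sup>L lborel (\<lambda>x. std_normal_density x * x ^ k))"
proof (induction k rule: nat_induct2)
  case 0
  show ?case
    using prob_space.prob_space[OF prob_space_normal_density]
    by (simp add: std_normal_mgf_def)
next
  case 1
  then show ?case
    using integral_std_normal_moment_odd[of 0]
      DERIV_imp_deriv[OF std_normal_mgf_has_field_derivative]
    by simp
next
  case (step k)
  have deriv_eq: "deriv std_normal_mgf = (\<lambda>\<theta>. \<theta> * std_normal_mgf \<theta>)"
    using DERIV_imp_deriv[OF std_normal_mgf_has_field_derivative] by blast
  have "(deriv ^^ (k + 2)) std_normal_mgf 0 = (deriv ^^ Suc k) (\<lambda>\<theta>. \<theta> * std_normal_mgf \<theta>) 0"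
    by (simp only: add_2_eq_Suc' funpow_Suc_right o_apply deriv_eq)
  also have "\<dots> = (\<Sum>i = 0..Suc k. of_nat (Suc k choose i) * (deriv ^^ i) (\<lambda>w. w) 0
                    * (deriv ^^ (Suc k - i)) std_normal_mgf 0)"
    by (rule higher_deriv_mult[of _ UNIV]) (auto intro: holomorphic_std_normal_mgf)
  also have "\<dots> = (\<Sum>i = 0..Suc k.
                      if i = 1 then of_nat (k + 1) * (deriv ^^ k) std_normal_mgf 0 else 0)"
    by (rule sum.cong) auto
  also have "\<dots> = of_nat (k + 1) * (deriv ^^ k) std_normal_mgf 0"
    by simp
  finally show ?case
    using step std_normal_moment_Suc_Suc[of k] by simp
qed

lemma norm_higher_deriv_minus_std_normal_moment_le:
  assumes "\<Phi> holomorphic_on UNIV"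
    and "\<And>\<theta>. norm \<theta> = 1 \<Longrightarrow> norm (\<Phi> \<theta> - std_normal_mgf \<theta>) \<le> B"
  shows "norm ((deriv ^^ k) \<Phi> 0 - of_real (integral\<^sup>L lborel (\<lambda>x. std_normal_density x * x ^ k)))
           \<le> fact k * B"
proof -
  have diff: "(\<lambda>\<theta>. \<Phi> \<theta> - std_normal_mgf \<theta>) holomorphic_on UNIV"
    using assms(1) holomorphic_std_normal_mgf by (intro holomorphic_intros)
  have "norm ((deriv ^^ k) (\<lambda>\<theta>. \<Phi> \<theta> - std_normal_mgf \<theta>) 0) \<le> fact k * B / 1 ^ k"
  proof (rule Cauchy_inequality)
    show "(\<lambda>\<theta>. \<Phi> \<theta> - std_normal_mgf \<theta>) holomorphic_on ball 0 1"
      using diff by (rule holomorphic_on_subset) simp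
    show "continuous_on (cball 0 1) (\<lambda>\<theta>. \<Phi> \<theta> - std_normal_mgf \<theta>)"
      using holomorphic_on_imp_continuous_on[OF diff] by (rule continuous_on_subset) simp
  qed (use assms(2) in auto)
  moreover have "(deriv ^^ k) (\<lambda>\<theta>. \<Phi> \<theta> - std_normal_mgf \<theta>) 0 =
                 (deriv ^^ k) \<Phi> 0 - (deriv ^^ k) std_normal_mgf 0"
    by (rule higher_deriv_diff[OF assms(1) holomorphic_std_normal_mgf]) auto
  ultimately show ?thesis
    by (simp add: higher_deriv_std_normal_mgf_0)
qed

section \<open>Exponential series\<close>

definition exp_series :: "(nat \<Rightarrow> complex) \<Rightarrow> (nat \<Rightarrow> real) \<Rightarrow> complex \<Rightarrow> complex" where
  "exp_series d x \<theta> = (\<Sum>n. d n * exp (\<theta> * of_real (x n)))"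

definition exp_summable :: "(nat \<Rightarrow> complex) \<Rightarrow> (nat \<Rightarrow> real) \<Rightarrow> bool" where
  "exp_summable d x \<longleftrightarrow> (\<forall>a\<ge>0. summable (\<lambda>n. norm (d n) * exp (a * \<bar>x n\<bar>)))"

lemma norm_mult_exp_le:
  fixes d \<theta> :: complex
  assumes "norm \<theta> \<le> R"
  shows "norm (d * exp (\<theta> * of_real x)) \<le> norm d * exp (R * \<bar>x\<bar>)"
proof -
  have "Re \<theta> * x \<le> \<bar>Re \<theta>\<bar> * \<bar>x\<bar>"
    by (metis abs_ge_self abs_mult)
  also have "\<dots> \<le> R * \<bar>x\<bar>"
    using abs_Re_le_cmod[of \<theta>] assms by (intro mult_right_mono) auto
  finally have "Re \<theta> * x \<le> R * \<bar>x\<bar>" .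
  then show ?thesis
    by (simp add: norm_mult mult_left_mono)
qed

lemma exp_summable_mult:
  assumes "exp_summable d x"
  shows "exp_summable (\<lambda>n. d n * of_real (x n)) x"
  unfolding exp_summable_def
proof (intro allI impI)
  fix a :: real
  assume "a \<ge> 0"
  then have summable: "summable (\<lambda>n. norm (d n) * exp ((a + 1) * \<bar>x n\<bar>))"
    using assms unfolding exp_summable_def by simp
  have bound: "norm (d n * of_real (x n)) * exp (a * \<bar>x n\<bar>)
      \<le> norm (d n) * exp ((a + 1) * \<bar>x n\<bar>)" for n
  proof -
    have "\<bar>x n\<bar> \<le> exp \<bar>x n\<bar>"
      using exp_ge_add_one_self[of "\<bar>x n\<bar>"] by linarith
    then have "norm (d n) * \<bar>x n\<bar> * exp (a * \<bar>x n\<bar>) \<le> norm (d n) * exp \<bar>x n\<bar> * exp (a * \<bar>x n\<bar>)"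
      by (intro mult_right_mono mult_left_mono) auto
    then show ?thesis
      by (simp add: norm_mult algebra_simps exp_add)
  qed
  show "summable (\<lambda>n. norm (d n * of_real (x n)) * exp (a * \<bar>x n\<bar>))"
    by (rule summable_comparison_test'[OF summable]) (use bound in simp)
qed

lemma exp_summable_mult_power:
  "exp_summable d x \<Longrightarrow> exp_summable (\<lambda>n. d n * of_real (x n) ^ k) x"
  by (induction k) (auto dest: exp_summable_mult simp: algebra_simps)

lemma summable_exp_series:
  assumes "exp_summable d x"
  shows "summable (\<lambda>n. d n * exp (\<theta> * of_real (x n)))"
proof (rule summable_norm_cancel)
  have "summable (\<lambda>n. norm (d n) * exp (norm \<theta> * \<bar>x n\<bar>))"
    using assms unfolding exp_summable_def by simp
  then show "summable (\<lambda>n. norm (d n * exp (\<theta> * of_real (x n))))"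
    by (rule summable_comparison_test[rotated]) (auto intro: norm_mult_exp_le)
qed

lemma exp_series_has_field_derivative:
  assumes "exp_summable d x"
  shows "(exp_series d x has_field_derivative exp_series (\<lambda>n. d n * of_real (x n)) x \<theta>) (at \<theta>)"
proof -
  define R where "R = norm \<theta> + 1"
  have "summable (\<lambda>n. norm (d n * of_real (x n)) * exp (R * \<bar>x n\<bar>))"
    using exp_summable_mult[OF assms] unfolding exp_summable_def R_def by simp
  then have "uniformly_convergent_on (ball 0 R)
      (\<lambda>N \<theta>. \<Sum>n<N. d n * of_real (x n) * exp (\<theta> * of_real (x n)))"
    by (rule Weierstrass_m_test'[rotated]) (auto intro: norm_mult_exp_le)
  moreover have "summable d"
    using summable_exp_series[OF assms, of 0] by simp
  ultimately have "((\<lambda>\<theta>. \<Sum>n. d n * exp (\<theta> * of_real (x n))) has_field_derivative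
         (\<Sum>n. d n * of_real (x n) * exp (\<theta> * of_real (x n)))) (at \<theta>)"
    by (intro has_field_derivative_series'(2)[of "ball 0 R" _ _ 0])
       (auto intro!: derivative_eq_intros simp: R_def add_nonneg_pos)
  then show ?thesis
    unfolding exp_series_def by simp
qed

lemma holomorphic_exp_series: "exp_summable d x \<Longrightarrow> exp_series d x holomorphic_on A"
  using exp_series_has_field_derivative
  by (meson field_differentiable_def field_differentiable_at_within holomorphic_on_def)

lemma higher_deriv_exp_series:
  assumes "exp_summable d x"
  shows "(deriv ^^ k) (exp_series d x) = exp_series (\<lambda>n. d n * of_real (x n) ^ k) x"
proof (induction k)
  case 0
  then show ?case by (simp add: exp_series_def)
next
  case (Suc k)
  have "deriv (exp_series (\<lambda>n. d n * of_real (x n) ^ k) x) =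
        exp_series (\<lambda>n. d n * of_real (x n) ^ k * of_real (x n)) x"
    by (intro ext DERIV_imp_deriv exp_series_has_field_derivative exp_summable_mult_power assms)
  with Suc show ?case
    by (simp add: algebra_simps)
qed

lemma Re_higher_deriv_exp_series_0:
  assumes "exp_summable d x"
  shows "Re ((deriv ^^ k) (exp_series d x) 0) = (\<Sum>n. Re (d n) * x n ^ k)"
proof -
  have "summable (\<lambda>n. d n * of_real (x n) ^ k)"
    using summable_exp_series[OF exp_summable_mult_power[OF assms], of k 0] by simp
  then have "Re (\<Sum>n. d n * of_real (x n) ^ k) = (\<Sum>n. Re (d n * of_real (x n) ^ k))"
    by (rule Re_suminf)
  then show ?thesis
    by (simp add: higher_deriv_exp_series[OF assms] exp_series_def flip: of_real_power)
qed

lemma norm_exp_diff_le: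
  fixes p q :: complex
  shows "norm (exp p - exp q) \<le> exp (norm q) * (norm (p - q) * exp (norm (p - q)))"
proof -
  have "exp p - exp q = exp q * (exp (p - q) - 1)"
    by (simp add: right_diff_distrib flip: exp_add)
  then have "norm (exp p - exp q) = norm (exp q) * norm (exp (p - q) - 1)"
    by (simp add: norm_mult)
  also have "\<dots> \<le> exp (norm q) * (norm (p - q) * exp (norm (p - q)))"
    using Taylor_exp_field[of "p - q" 0] norm_exp[of q]
    by (intro mult_mono) (auto simp: mult.commute)
  finally show ?thesis .
qed

lemma higher_deriv_exp_comp_0:
  fixes h h' h'' :: "complex \<Rightarrow> complex"
  assumes h: "\<And>z. (h has_field_derivative h' z) (at z)"
    and h': "\<And>z. (h' has_field_derivative h'' z) (at z)"
    and "h 0 = 0"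
  shows "(deriv ^^ 1) (\<lambda>z. exp (h z)) 0 = h' 0"
    and "(deriv ^^ 2) (\<lambda>z. exp (h z)) 0 = h' 0 ^ 2 + h'' 0"
proof -
  have deriv1: "deriv (\<lambda>z. exp (h z)) = (\<lambda>z. exp (h z) * h' z)"
    by (auto intro!: ext DERIV_imp_deriv derivative_eq_intros h)
  show "(deriv ^^ 1) (\<lambda>z. exp (h z)) 0 = h' 0"
    using \<open>h 0 = 0\<close> by (simp add: deriv1)
  have "((\<lambda>z. exp (h z) * h' z) has_field_derivative
          exp (h 0) * h' 0 * h' 0 + exp (h 0) * h'' 0) (at 0)"
    by (auto intro!: derivative_eq_intros h h' simp: algebra_simps)
  then show "(deriv ^^ 2) (\<lambda>z. exp (h z)) 0 = h' 0 ^ 2 + h'' 0"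
    using \<open>h 0 = 0\<close> by (simp add: numeral_2_eq_2 deriv1 DERIV_imp_deriv power2_eq_square)
qed

lemma taylor_series_sums:
  assumes "h holomorphic_on UNIV"
  shows "(\<lambda>n. taylor_coeff h n * w ^ n) sums h w"
  using holomorphic_power_series[of h 0 "norm w + 1" w] holomorphic_on_subset[OF assms]
  by (simp add: taylor_coeff_def)

lemma summable_norm_taylor_coeff:
  assumes "h holomorphic_on UNIV" "r \<ge> 0"
  shows "summable (\<lambda>n. norm (taylor_coeff h n) * r ^ n)"
proof -
  have "summable (\<lambda>n. norm (taylor_coeff h n * of_real r ^ n))"
    using taylor_series_sums[OF assms(1), of "of_real (r + 1)"] assms
    by (intro powser_insidea[OF sums_summable]) auto
  then show ?thesis
    using assms by (simp add: norm_mult norm_power)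
qed

(* For n > eps sigma, n^3 e^n <= e^(4n) leaves a factor e^(-n) <= e^(-eps sigma) to spare. *)
lemma cube_mult_exp_le:
  fixes \<sigma> \<epsilon> :: real
  assumes "\<sigma> \<ge> 1" "\<epsilon> > 0"
  shows "(real n / \<sigma>) ^ 3 * exp (real n / \<sigma>)
           \<le> \<epsilon> * exp \<epsilon> * (real n / \<sigma>) ^ 2 + exp (5 * real n - \<epsilon> * \<sigma>)"
proof (cases "real n \<le> \<epsilon> * \<sigma>")
  case True
  define y where "y = real n / \<sigma>"
  have y: "0 \<le> y" "y \<le> \<epsilon>"
    using True assms by (auto simp: y_def field_simps)
  have "y ^ 3 * exp y = y * (y ^ 2 * exp y)"
    by (simp add: power3_eq_cube power2_eq_square)
  also have "\<dots> \<le> \<epsilon> * (y ^ 2 * exp \<epsilon>)"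
    using y by (intro mult_mono) auto
  also have "\<dots> \<le> \<epsilon> * exp \<epsilon> * y ^ 2 + exp (5 * real n - \<epsilon> * \<sigma>)"
    by simp
  finally show ?thesis
    by (simp add: y_def)
next
  case False
  have n_le_exp: "real n \<le> exp (real n)"
    using exp_ge_add_one_self[of "real n"] by linarith
  have "(real n / \<sigma>) ^ 3 * exp (real n / \<sigma>) \<le> real n ^ 3 * exp (real n)"
    using assms mult_right_mono[of 1 \<sigma> "real n"]
    by (intro mult_mono power_mono) (auto simp: field_simps)
  also have "\<dots> \<le> exp (real n) ^ 3 * exp (real n)"
    using n_le_exp by (intro mult_right_mono power_mono) auto
  also have "\<dots> = exp (5 * real n - real n)"
    by (simp flip: exp_of_nat_mult exp_add)
  also have "\<dots> \<le> exp (5 * real n - \<epsilon> * \<sigma>)"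
    using False by simp
  moreover have "0 \<le> \<epsilon> * exp \<epsilon> * (real n / \<sigma>) ^ 2"
    using assms by simp
  ultimately show ?thesis
    by linarith
qed

section \<open>The Khinchin family of exp g\<close>

locale nonneg_taylor_entire =
  fixes g :: "complex \<Rightarrow> complex"
  assumes entire: "g holomorphic_on UNIV"
    and nonconst: "\<not> (\<exists>c. \<forall>z. g z = c)"
    and coeff_nonneg: "\<And>n. Im (taylor_coeff g n) = 0 \<and> Re (taylor_coeff g n) \<ge> 0"
begin

abbreviation f :: "complex \<Rightarrow> complex" where
  "f \<equiv> \<lambda>z. exp (g z)"

definition \<beta> :: "nat \<Rightarrow> real" where
  "\<beta> n = Re (taylor_coeff g n)"

(* moment_sum 0, 1 and 2 are g, m_f and sigma_f^2 on the positive axis. *)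
definition moment_sum :: "nat \<Rightarrow> real \<Rightarrow> real" where
  "moment_sum j t = (\<Sum>n. \<beta> n * t ^ n * real n ^ j)"

definition g_term :: "real \<Rightarrow> nat \<Rightarrow> complex" where
  "g_term t n = of_real (\<beta> n * t ^ n)"

(* P(X_t = n), taken complex so that the moment generating function is an exp_series. *)
definition weight :: "real \<Rightarrow> nat \<Rightarrow> complex" where
  "weight t n = taylor_coeff f n * of_real t ^ n / f (of_real t)"

(* The cumulant generating function of (X_t - mu) / sigma. *)
definition cgf :: "real \<Rightarrow> real \<Rightarrow> real \<Rightarrow> complex \<Rightarrow> complex" where
  "cgf t \<mu> \<sigma> \<theta> = g (of_real t * exp (\<theta> / of_real \<sigma>)) - g (of_real t) - \<theta> * of_real (\<mu> / \<sigma>)"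

lemma \<beta>_nonneg: "\<beta> n \<ge> 0"
  using coeff_nonneg unfolding \<beta>_def by auto

lemma taylor_coeff_g: "taylor_coeff g n = of_real (\<beta> n)"
  using coeff_nonneg[of n] unfolding \<beta>_def by (simp add: complex_eq_iff)

lemma g_sums: "(\<lambda>n. of_real (\<beta> n) * w ^ n) sums g w"
  using taylor_series_sums[OF entire] by (simp add: taylor_coeff_g)

lemma f_sums: "(\<lambda>n. taylor_coeff f n * w ^ n) sums f w"
  using entire by (intro taylor_series_sums holomorphic_intros) auto

lemma summable_\<beta>: "r \<ge> 0 \<Longrightarrow> summable (\<lambda>n. \<beta> n * r ^ n)"
  using summable_norm_taylor_coeff[OF entire] \<beta>_nonneg by (simp add: taylor_coeff_g)

lemma g_of_real: "g (of_real r) = of_real (moment_sum 0 r)"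
proof -
  have g_sums_real: "(\<lambda>n. of_real (\<beta> n * r ^ n)) sums g (of_real r)"
    using g_sums[of "of_real r"] by simp
  then have summable: "summable (\<lambda>n. \<beta> n * r ^ n)"
    using summable_of_real_iff sums_summable by blast
  have "(\<lambda>n. of_real (\<beta> n * r ^ n)) sums (of_real (moment_sum 0 r) :: complex)"
    using sums_of_real[OF summable_sums[OF summable]] by (simp add: moment_sum_def)
  with g_sums_real show ?thesis
    using sums_unique2 by blast
qed

lemma exp_summable_g_term:
  assumes "t \<ge> 0" "\<sigma> > 0"
  shows "exp_summable (g_term t) (\<lambda>n. real n / \<sigma>)"
  unfolding exp_summable_def
proof (intro allI impI)
  fix a :: real
  assume "a \<ge> 0"
  have "norm (g_term t n) * exp (a * \<bar>real n / \<sigma>\<bar>) = \<beta> n * (t * exp (a / \<sigma>)) ^ n" for n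
    using assms \<beta>_nonneg[of n]
    by (simp add: g_term_def norm_mult norm_power power_mult_distrib field_simps
        flip: exp_of_nat_mult)
  then show "summable (\<lambda>n. norm (g_term t n) * exp (a * \<bar>real n / \<sigma>\<bar>))"
    using summable_\<beta>[of "t * exp (a / \<sigma>)"] assms by simp
qed

lemma summable_moment_sum:
  assumes "t \<ge> 0"
  shows "summable (\<lambda>n. \<beta> n * t ^ n * real n ^ j)"
proof -
  have "summable (\<lambda>n. norm (g_term t n * of_real (real n / 1) ^ j) * exp (0 * \<bar>real n / 1\<bar>))"
    using exp_summable_mult_power[OF exp_summable_g_term[OF assms, of 1],
        unfolded exp_summable_def, rule_format, of 0]
    by simp
  then show ?thesis
    using assms \<beta>_nonneg by (simp add: g_term_def norm_mult norm_power abs_mult)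
qed

lemma exp_summable_weight:
  assumes "t \<ge> 0" "\<sigma> > 0"
  shows "exp_summable (weight t) (\<lambda>n. (real n - \<mu>) / \<sigma>)"
  unfolding exp_summable_def
proof (intro allI impI)
  fix a :: real
  assume "a \<ge> 0"
  define C where "C = exp (a * \<bar>\<mu>\<bar> / \<sigma>) / exp (moment_sum 0 t)"
  have majorant: "summable (\<lambda>n. C * (norm (taylor_coeff f n) * (t * exp (a / \<sigma>)) ^ n))"
    using assms entire by (intro summable_mult summable_norm_taylor_coeff holomorphic_intros) auto
  have term_le: "norm (weight t n) * exp (a * \<bar>(real n - \<mu>) / \<sigma>\<bar>)
      \<le> C * (norm (taylor_coeff f n) * (t * exp (a / \<sigma>)) ^ n)" for n
  proof -
    have "a * \<bar>real n - \<mu>\<bar> \<le> a * (\<bar>\<mu>\<bar> + real n)"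
      using \<open>a \<ge> 0\<close> by (intro mult_left_mono) arith+
    then have "a * \<bar>(real n - \<mu>) / \<sigma>\<bar> \<le> a * \<bar>\<mu>\<bar> / \<sigma> + real n * (a / \<sigma>)"
      using assms by (simp add: abs_div field_simps)
    then have exp_term_le: "exp (a * \<bar>(real n - \<mu>) / \<sigma>\<bar>) \<le> exp (a * \<bar>\<mu>\<bar> / \<sigma>) * exp (a / \<sigma>) ^ n"
      by (simp flip: exp_add exp_of_nat_mult)
    have norm_weight: "norm (weight t n) = norm (taylor_coeff f n) * t ^ n / exp (moment_sum 0 t)"
      using assms
      by (simp add: weight_def g_of_real norm_mult norm_divide norm_power flip: exp_of_real)
    have "norm (weight t n) * exp (a * \<bar>(real n - \<mu>) / \<sigma>\<bar>)
        \<le> norm (taylor_coeff f n) * t ^ n / exp (moment_sum 0 t)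
            * (exp (a * \<bar>\<mu>\<bar> / \<sigma>) * exp (a / \<sigma>) ^ n)"
      unfolding norm_weight by (rule mult_left_mono[OF exp_term_le]) (use assms in simp)
    also have "\<dots> = C * (norm (taylor_coeff f n) * (t * exp (a / \<sigma>)) ^ n)"
      by (simp add: C_def power_mult_distrib)
    finally show ?thesis .
  qed
  show "summable (\<lambda>n. norm (weight t n) * exp (a * \<bar>(real n - \<mu>) / \<sigma>\<bar>))"
    by (rule summable_comparison_test'[OF majorant]) (use term_le in simp)
qed

lemma exp_series_g_term:
  assumes "\<sigma> > 0"
  shows "exp_series (g_term t) (\<lambda>n. real n / \<sigma>) \<theta> = g (of_real t * exp (\<theta> / of_real \<sigma>))"
proof -
  have "(of_real t * exp (\<theta> / of_real \<sigma>)) ^ n = of_real t ^ n * exp (\<theta> * of_real (real n / \<sigma>))"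
    for n
    by (simp add: power_mult_distrib mult.commute flip: exp_of_nat_mult)
  then show ?thesis
    using g_sums[of "of_real t * exp (\<theta> / of_real \<sigma>)"]
    by (simp add: exp_series_def g_term_def sums_iff mult.assoc)
qed

lemma exp_series_weight:
  assumes "\<sigma> > 0"
  shows "exp_series (weight t) (\<lambda>n. (real n - \<mu>) / \<sigma>) \<theta> = exp (cgf t \<mu> \<sigma> \<theta>)"
proof -
  define w where "w = of_real t * exp (\<theta> / of_real \<sigma>)"
  define K where "K = exp (- (\<theta> * of_real (\<mu> / \<sigma>))) / f (of_real t)"
  have "taylor_coeff f n * w ^ n * K = weight t n * exp (\<theta> * of_real ((real n - \<mu>) / \<sigma>))" for n
    by (simp add: w_def K_def weight_def power_mult_distrib diff_divide_distrib algebra_simps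
        flip: exp_of_nat_mult exp_add)
  then have "(\<lambda>n. weight t n * exp (\<theta> * of_real ((real n - \<mu>) / \<sigma>))) sums (f w * K)"
    using sums_mult2[OF f_sums[of w], of K] by simp
  moreover have "f w * K = exp (cgf t \<mu> \<sigma> \<theta>)"
    by (simp add: w_def K_def cgf_def exp_diff exp_minus exp_add field_simps)
  ultimately show ?thesis
    by (simp add: exp_series_def sums_iff)
qed

lemma higher_deriv_exp_series_g_term_0:
  assumes "t \<ge> 0" "\<sigma> > 0"
  shows "(deriv ^^ k) (exp_series (g_term t) (\<lambda>n. real n / \<sigma>)) 0 = of_real (moment_sum k t / \<sigma> ^ k)"
proof -
  have "(\<lambda>n. \<beta> n * t ^ n * real n ^ k / \<sigma> ^ k) sums (moment_sum k t / \<sigma> ^ k)"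
    unfolding moment_sum_def using summable_moment_sum[OF assms(1)]
    by (intro sums_divide summable_sums)
  from sums_of_real[OF this]
  have "(\<lambda>n. g_term t n * of_real (real n / \<sigma>) ^ k) sums of_real (moment_sum k t / \<sigma> ^ k)"
    by (simp add: g_term_def power_divide flip: of_real_mult of_real_power of_real_divide)
  then show ?thesis
    using assms by (simp add: higher_deriv_exp_series exp_summable_g_term exp_series_def sums_iff)
qed

lemma higher_deriv_mgf_0:
  assumes "t \<ge> 0" "\<sigma> > 0"
  shows "(deriv ^^ 1) (\<lambda>\<theta>. exp (cgf t \<mu> \<sigma> \<theta>)) 0 = of_real ((moment_sum 1 t - \<mu>) / \<sigma>)"
    and "(deriv ^^ 2) (\<lambda>\<theta>. exp (cgf t \<mu> \<sigma> \<theta>)) 0 =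
           of_real (((moment_sum 1 t - \<mu>) / \<sigma>) ^ 2 + moment_sum 2 t / \<sigma> ^ 2)"
proof -
  define E where "E = exp_series (g_term t) (\<lambda>n. real n / \<sigma>)"
  have holo: "E holomorphic_on UNIV"
    unfolding E_def using assms by (intro holomorphic_exp_series exp_summable_g_term)
  have cgf_eq: "cgf t \<mu> \<sigma> = (\<lambda>\<theta>. E \<theta> - g (of_real t) - \<theta> * of_real (\<mu> / \<sigma>))"
    unfolding E_def cgf_def using assms by (simp add: exp_series_g_term)
  have cgf_deriv: "(cgf t \<mu> \<sigma> has_field_derivative deriv E \<theta> - of_real (\<mu> / \<sigma>)) (at \<theta>)" for \<theta>
    unfolding cgf_eq using holomorphic_derivI[OF holo] assms
    by (auto intro!: derivative_eq_intros)
  have cgf_deriv2: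
    "((\<lambda>\<theta>. deriv E \<theta> - of_real (\<mu> / \<sigma>)) has_field_derivative deriv (deriv E) \<theta>) (at \<theta>)" for \<theta>
    using holomorphic_derivI[OF holomorphic_deriv[OF holo]]
    by (auto intro!: derivative_eq_intros)
  have "cgf t \<mu> \<sigma> 0 = 0"
    by (simp add: cgf_def)
  note mgf_derivs = higher_deriv_exp_comp_0[OF cgf_deriv cgf_deriv2 this]
  have "deriv E 0 = of_real (moment_sum 1 t / \<sigma>)"
    using higher_deriv_exp_series_g_term_0[OF assms, of 1] by (simp add: E_def)
  moreover have "deriv (deriv E) 0 = of_real (moment_sum 2 t / \<sigma> ^ 2)"
    using higher_deriv_exp_series_g_term_0[OF assms, of 2] by (simp add: E_def numeral_2_eq_2)
  ultimately show "(deriv ^^ 1) (\<lambda>\<theta>. exp (cgf t \<mu> \<sigma> \<theta>)) 0 = of_real ((moment_sum 1 t - \<mu>) / \<sigma>)"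
    and "(deriv ^^ 2) (\<lambda>\<theta>. exp (cgf t \<mu> \<sigma> \<theta>)) 0 =
           of_real (((moment_sum 1 t - \<mu>) / \<sigma>) ^ 2 + moment_sum 2 t / \<sigma> ^ 2)"
    using mgf_derivs by (simp_all add: diff_divide_distrib)
qed

lemma khinchin_prob_eq: "khinchin_prob f t n = Re (weight t n)"
  by (simp add: khinchin_prob_def weight_def g_of_real flip: exp_of_real of_real_power)

lemma khinchin_moment_eq_higher_deriv_mgf:
  assumes "t \<ge> 0" "\<sigma> > 0"
  shows "(\<Sum>n. ((real n - \<mu>) / \<sigma>) ^ k * khinchin_prob f t n) =
           Re ((deriv ^^ k) (\<lambda>\<theta>. exp (cgf t \<mu> \<sigma> \<theta>)) 0)"
proof -
  have "exp_series (weight t) (\<lambda>n. (real n - \<mu>) / \<sigma>) = (\<lambda>\<theta>. exp (cgf t \<mu> \<sigma> \<theta>))"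
    using assms by (intro ext exp_series_weight)
  then show ?thesis
    using Re_higher_deriv_exp_series_0[OF exp_summable_weight[OF assms, of \<mu>], of k]
    by (simp add: khinchin_prob_eq mult.commute)
qed

lemma khinchin_mean_eq: "t \<ge> 0 \<Longrightarrow> khinchin_mean f t = moment_sum 1 t"
  using khinchin_moment_eq_higher_deriv_mgf[of t 1 0 1] higher_deriv_mgf_0(1)[of t 1 0]
  by (simp add: khinchin_mean_def)

lemma khinchin_var_eq: "t \<ge> 0 \<Longrightarrow> khinchin_var f t = moment_sum 2 t"
  using khinchin_moment_eq_higher_deriv_mgf[of t 1 "moment_sum 1 t" 2]
    higher_deriv_mgf_0(2)[of t 1 "moment_sum 1 t"]
  by (simp add: khinchin_var_def khinchin_mean_eq)

lemma khinchin_norm_moment_eq: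
  assumes "t \<ge> 0" "moment_sum 2 t > 0"
  shows "khinchin_norm_moment f t k =
           Re ((deriv ^^ k) (\<lambda>\<theta>. exp (cgf t (moment_sum 1 t) (sqrt (moment_sum 2 t)) \<theta>)) 0)"
  using khinchin_moment_eq_higher_deriv_mgf[of t "sqrt (moment_sum 2 t)" "moment_sum 1 t" k] assms
  by (simp add: khinchin_norm_moment_def khinchin_mean_eq khinchin_var_eq)

definition cgf_remainder :: "real \<Rightarrow> real" where
  "cgf_remainder t =
     (\<Sum>n. \<beta> n * t ^ n * (real n / sqrt (moment_sum 2 t)) ^ 3
            * exp (real n / sqrt (moment_sum 2 t)))"

lemma summable_cgf_remainder:
  assumes "t \<ge> 0" "\<sigma> > 0"
  shows "summable (\<lambda>n. \<beta> n * t ^ n * (real n / \<sigma>) ^ 3 * exp (real n / \<sigma>))"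
proof -
  have "summable (\<lambda>n. norm (g_term t n * of_real (real n / \<sigma>) ^ 3) * exp (1 * \<bar>real n / \<sigma>\<bar>))"
    using exp_summable_mult_power[OF exp_summable_g_term[OF assms], unfolded exp_summable_def,
        rule_format, of 1]
    by simp
  then show ?thesis
    using assms \<beta>_nonneg
    by (simp add: g_term_def norm_mult norm_power norm_divide abs_mult mult.assoc)
qed

lemma norm_cgf_minus_half_square_le:
  assumes "t \<ge> 0" "moment_sum 2 t > 0" "norm \<theta> \<le> 1"
  shows "norm (cgf t (moment_sum 1 t) (sqrt (moment_sum 2 t)) \<theta> - \<theta>\<^sup>2 / 2) \<le> cgf_remainder t"
proof -
  define \<sigma> where "\<sigma> = sqrt (moment_sum 2 t)"
  define y where "y n = real n / \<sigma>" for n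
  have \<sigma>: "\<sigma> > 0" "\<sigma>\<^sup>2 = moment_sum 2 t"
    using assms by (auto simp: \<sigma>_def)
  have summable_g: "exp_summable (g_term t) y"
    unfolding y_def using assms(1) \<sigma>(1) by (rule exp_summable_g_term)
  have sums_power: "(\<lambda>n. g_term t n * of_real (y n) ^ k) sums of_real (moment_sum k t / \<sigma> ^ k)"
    for k
    using higher_deriv_exp_series_g_term_0[OF assms(1) \<sigma>(1), of k]
      summable_exp_series[OF exp_summable_mult_power[OF summable_g], of k 0]
    by (simp add: higher_deriv_exp_series exp_summable_g_term assms(1) \<sigma>(1) exp_series_def y_def
        sums_iff)
  have sums_exp:
    "(\<lambda>n. g_term t n * exp (\<theta> * of_real (y n))) sums g (of_real t * exp (\<theta> / of_real \<sigma>))"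
    using summable_sums[OF summable_exp_series[OF summable_g], of \<theta>]
      exp_series_g_term[OF \<sigma>(1), of t \<theta>]
    by (simp add: exp_series_def y_def)
  have sums_const: "(\<lambda>n. g_term t n) sums g (of_real t)"
    using sums_power[of 0] by (simp add: g_of_real)
  have sums_linear: "(\<lambda>n. g_term t n * (\<theta> * of_real (y n))) sums (\<theta> * of_real (moment_sum 1 t / \<sigma>))"
    using sums_mult[OF sums_power[of 1], of \<theta>] by (simp add: algebra_simps)
  have sums_square: "(\<lambda>n. g_term t n * (\<theta> * of_real (y n))\<^sup>2 / 2) sums (\<theta>\<^sup>2 / 2)"
    using sums_mult[OF sums_power[of 2], of "\<theta>\<^sup>2 / 2"] \<sigma> assms(2)
    by (simp add: power_mult_distrib algebra_simps)
  have "g_term t n * (exp (\<theta> * of_real (y n)) - (\<Sum>i\<le>2. (\<theta> * of_real (y n)) ^ i / fact i)) =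
      g_term t n * exp (\<theta> * of_real (y n)) - g_term t n - g_term t n * (\<theta> * of_real (y n))
        - g_term t n * (\<theta> * of_real (y n))\<^sup>2 / 2" for n
    by (simp add: numeral_2_eq_2 algebra_simps power2_eq_square)
  then have sums_remainder:
    "(\<lambda>n. g_term t n * (exp (\<theta> * of_real (y n)) - (\<Sum>i\<le>2. (\<theta> * of_real (y n)) ^ i / fact i)))
      sums (cgf t (moment_sum 1 t) \<sigma> \<theta> - \<theta>\<^sup>2 / 2)"
    using sums_diff[OF sums_diff[OF sums_diff[OF sums_exp sums_const] sums_linear] sums_square]
    by (simp add: cgf_def)
  have term_le:
    "norm (g_term t n * (exp (\<theta> * of_real (y n)) - (\<Sum>i\<le>2. (\<theta> * of_real (y n)) ^ i / fact i)))
      \<le> \<beta> n * t ^ n * (real n / \<sigma>) ^ 3 * exp (real n / \<sigma>)" for n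
  proof -
    have y_nonneg: "y n \<ge> 0"
      using \<sigma> by (simp add: y_def)
    then have norm_le: "norm (\<theta> * of_real (y n)) \<le> y n"
      using assms(3) by (simp add: norm_mult mult_left_le_one_le)
    have "norm (exp (\<theta> * of_real (y n)) - (\<Sum>i\<le>2. (\<theta> * of_real (y n)) ^ i / fact i))
        \<le> exp (norm (\<theta> * of_real (y n))) * norm (\<theta> * of_real (y n)) ^ 3 / 2"
      using Taylor_exp_field[of "\<theta> * of_real (y n)" 2] by (simp add: numeral_3_eq_3)
    also have "\<dots> \<le> exp (y n) * y n ^ 3 / 2"
      using norm_le by (intro divide_right_mono mult_mono power_mono) auto
    also have "\<dots> \<le> exp (y n) * y n ^ 3"
      using y_nonneg by simp
    finally have "norm (exp (\<theta> * of_real (y n)) - (\<Sum>i\<le>2. (\<theta> * of_real (y n)) ^ i / fact i))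
        \<le> exp (y n) * y n ^ 3" .
    moreover have "norm (g_term t n) = \<beta> n * t ^ n"
      using assms(1) \<beta>_nonneg[of n] by (simp add: g_term_def norm_mult norm_power)
    ultimately show ?thesis
      using assms(1) \<beta>_nonneg[of n] unfolding norm_mult
      by (simp add: y_def mult_left_mono mult_ac)
  qed
  have "norm (cgf t (moment_sum 1 t) \<sigma> \<theta> - \<theta>\<^sup>2 / 2)
      \<le> (\<Sum>n. \<beta> n * t ^ n * (real n / \<sigma>) ^ 3 * exp (real n / \<sigma>))"
    unfolding sums_unique[OF sums_remainder]
    by (rule norm_suminf_le[OF term_le summable_cgf_remainder[OF assms(1) \<sigma>(1)]])
  then show ?thesis
    by (simp add: cgf_remainder_def \<sigma>_def)
qed

lemma norm_mgf_minus_std_normal_mgf_le: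
  assumes "t \<ge> 0" "moment_sum 2 t > 0" "norm \<theta> \<le> 1"
  shows "norm (exp (cgf t (moment_sum 1 t) (sqrt (moment_sum 2 t)) \<theta>) - std_normal_mgf \<theta>)
           \<le> exp (1 / 2) * (cgf_remainder t * exp (cgf_remainder t))"
proof -
  define p where "p = cgf t (moment_sum 1 t) (sqrt (moment_sum 2 t)) \<theta>"
  have close: "norm (p - \<theta>\<^sup>2 / 2) \<le> cgf_remainder t"
    unfolding p_def by (rule norm_cgf_minus_half_square_le[OF assms])
  have "norm (\<theta>\<^sup>2 / 2) \<le> 1 / 2"
    using assms(3) by (simp add: norm_divide norm_power power_le_one)
  then have "exp (norm (\<theta>\<^sup>2 / 2)) \<le> exp (1 / 2)"
    by simp
  moreover have "norm (p - \<theta>\<^sup>2 / 2) * exp (norm (p - \<theta>\<^sup>2 / 2))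
      \<le> cgf_remainder t * exp (cgf_remainder t)"
    using close order_trans[OF norm_ge_zero close] by (intro mult_mono) auto
  ultimately have "exp (norm (\<theta>\<^sup>2 / 2)) * (norm (p - \<theta>\<^sup>2 / 2) * exp (norm (p - \<theta>\<^sup>2 / 2)))
      \<le> exp (1 / 2) * (cgf_remainder t * exp (cgf_remainder t))"
    by (rule mult_mono) auto
  then show ?thesis
    using norm_exp_diff_le[of p "\<theta>\<^sup>2 / 2"] unfolding std_normal_mgf_def p_def by linarith
qed

lemma khinchin_norm_moment_error_le:
  assumes "t \<ge> 0" "moment_sum 2 t > 0"
  shows "\<bar>khinchin_norm_moment f t k - integral\<^sup>L lborel (\<lambda>x. std_normal_density x * x ^ k)\<bar>
           \<le> fact k * (exp (1 / 2) * (cgf_remainder t * exp (cgf_remainder t)))"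
proof -
  define \<Phi> where "\<Phi> \<theta> = exp (cgf t (moment_sum 1 t) (sqrt (moment_sum 2 t)) \<theta>)" for \<theta>
  have "\<Phi> holomorphic_on UNIV"
    unfolding \<Phi>_def cgf_def using entire assms
    by (intro holomorphic_intros holomorphic_on_compose_gen[OF _ entire, unfolded o_def]) auto
  then have "norm ((deriv ^^ k) \<Phi> 0
        - of_real (integral\<^sup>L lborel (\<lambda>x. std_normal_density x * x ^ k)))
      \<le> fact k * (exp (1 / 2) * (cgf_remainder t * exp (cgf_remainder t)))"
    using norm_mgf_minus_std_normal_mgf_le[OF assms] unfolding \<Phi>_def
    by (intro norm_higher_deriv_minus_std_normal_moment_le) auto
  moreover have "khinchin_norm_moment f t k = Re ((deriv ^^ k) \<Phi> 0)"
    unfolding \<Phi>_def by (rule khinchin_norm_moment_eq[OF assms])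
  moreover have "\<bar>Re z - x\<bar> \<le> norm (z - of_real x)" for z x
    using abs_Re_le_cmod[of "z - of_real x"] by simp
  ultimately show ?thesis
    using order_trans by metis
qed

section \<open>Growth of g under finite order\<close>

lemma exists_pos_coeff: "\<exists>d\<ge>1. \<beta> d > 0"
proof (rule ccontr)
  assume "\<not> ?thesis"
  then have "\<beta> n = 0" if "n \<noteq> 0" for n
    using that \<beta>_nonneg[of n] by (metis less_one not_le order_le_less)
  then have "(\<lambda>n. of_real (\<beta> n) * w ^ n) = (\<lambda>n. if n = 0 then of_real (\<beta> 0) else 0)"
    for w :: complex
    by auto
  then have "(\<lambda>n. of_real (\<beta> n) * w ^ n) sums of_real (\<beta> 0)" for w :: complex
    using sums_single[of 0 "\<lambda>_. of_real (\<beta> 0) :: complex"] by simp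
  then have "g w = of_real (\<beta> 0)" for w
    using g_sums sums_unique2 by blast
  then show False
    using nonconst by blast
qed

lemma term_le_moment_sum: "t \<ge> 0 \<Longrightarrow> \<beta> n * t ^ n * real n ^ j \<le> moment_sum j t"
  unfolding moment_sum_def
  using sum_le_suminf[OF summable_moment_sum, of t "{n}"] \<beta>_nonneg by auto

lemma moment_sum_2_ge:
  assumes "n \<ge> 1" "m \<le> n" "t \<ge> 1"
  shows "\<beta> n * t ^ m \<le> moment_sum 2 t"
proof -
  have "\<beta> n * t ^ m * 1 \<le> \<beta> n * t ^ n * real n ^ 2"
    using assms \<beta>_nonneg[of n] by (intro mult_mono mult_left_mono power_increasing) auto
  then show ?thesis
    using term_le_moment_sum[of t n 2] assms by simp
qed

lemma moment_sum_0_pos: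
  assumes "r > 0"
  shows "moment_sum 0 r > 0"
proof -
  obtain d where "\<beta> d > 0"
    using exists_pos_coeff by blast
  then have "0 < \<beta> d * r ^ d"
    using assms by simp
  then show ?thesis
    using term_le_moment_sum[of r d 0] assms by simp
qed

lemma sqrt_moment_sum_2_at_top: "filterlim (\<lambda>t. sqrt (moment_sum 2 t)) at_top at_top"
proof -
  obtain d where d: "d \<ge> 1" "\<beta> d > 0"
    using exists_pos_coeff by blast
  have "filterlim (\<lambda>t. sqrt (\<beta> d * t)) at_top at_top"
    using filterlim_tendsto_pos_mult_at_top[OF tendsto_const d(2) filterlim_ident]
    by (rule filterlim_compose[OF sqrt_at_top])
  moreover have "eventually (\<lambda>t. sqrt (\<beta> d * t) \<le> sqrt (moment_sum 2 t)) at_top"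
    using eventually_ge_at_top[of 1]
    by eventually_elim (use moment_sum_2_ge[OF d(1), of 1] d in auto)
  ultimately show ?thesis
    by (rule filterlim_at_top_mono)
qed

lemma eventually_sqrt_moment_sum_2_ge_1: "eventually (\<lambda>t. 1 \<le> sqrt (moment_sum 2 t)) at_top"
  using filterlim_at_top[THEN iffD1, OF sqrt_moment_sum_2_at_top] by blast

lemma moment_sum_0_le_max_modulus:
  assumes "r \<ge> 0"
  shows "moment_sum 0 r \<le> Sup ((\<lambda>z. norm (g z)) ` sphere 0 r)"
proof -
  have "continuous_on (sphere 0 r) (\<lambda>z. norm (g z))"
    using holomorphic_on_imp_continuous_on[OF entire]
    by (intro continuous_on_norm) (auto intro: continuous_on_subset)
  then have "bdd_above ((\<lambda>z. norm (g z)) ` sphere 0 r)"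
    by (intro bounded_imp_bdd_above compact_imp_bounded compact_continuous_image compact_sphere)
  moreover have "of_real r \<in> sphere (0 :: complex) r"
    using assms by simp
  ultimately have "norm (g (of_real r)) \<le> Sup ((\<lambda>z. norm (g z)) ` sphere 0 r)"
    by (intro cSup_upper) auto
  then show ?thesis
    using term_le_moment_sum[OF assms, of 0 0] \<beta>_nonneg[of 0] by (simp add: g_of_real)
qed

lemma ln_moment_sum_0_le_power:
  assumes "entire_order g < \<infinity>"
  obtains K :: nat where "eventually (\<lambda>r. ln (moment_sum 0 r) \<le> r ^ K) at_top"
proof -
  define M where "M r = Sup ((\<lambda>z. norm (g z)) ` sphere 0 r)" for r
  obtain K :: nat where "entire_order g < ereal (real K)"
    using assms less_PInf_Ex_of_nat by auto
  then have "eventually (\<lambda>r. ereal (ln (ln (M r)) / ln r) < ereal (real K)) at_top"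
    unfolding entire_order_def M_def by (rule Limsup_lessD)
  then have "eventually (\<lambda>r. ln (moment_sum 0 r) \<le> r ^ K) at_top"
    using eventually_gt_at_top[of 1]
  proof eventually_elim
    case (elim r)
    have "ln (moment_sum 0 r) \<le> ln (M r)"
      using moment_sum_0_le_max_modulus[of r] moment_sum_0_pos[of r] elim by (simp add: M_def)
    moreover have "ln (M r) \<le> r ^ K"
    proof (cases "ln (M r) \<le> 0")
      case True
      moreover have "0 \<le> r ^ K"
        using elim by simp
      ultimately show ?thesis
        by linarith
    next
      case False
      then have "ln (ln (M r)) < real K * ln r"
        using elim by (simp add: divide_less_eq)
      then show ?thesis
        using False elim by (simp add: ln_less_cancel_iff exp_of_nat_mult less_imp_le
            flip: exp_less_cancel_iff[of "ln (ln (M r))"])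
    qed
    ultimately show ?case
      by linarith
  qed
  then show ?thesis
    using that by blast
qed

lemma ln_moment_sum_0_le_sqrt_var_polynomial:
  assumes "\<And>n. n > D \<Longrightarrow> \<beta> n = 0" "c > 0" "\<delta> > 0"
  shows "eventually (\<lambda>t. ln (moment_sum 0 (c * t)) \<le> \<delta> * sqrt (moment_sum 2 t)) at_top"
proof -
  obtain d where d: "d \<ge> 1" "\<beta> d > 0"
    using exists_pos_coeff by blast
  define C where "C = moment_sum 0 1"
  have C: "C > 0"
    unfolding C_def by (rule moment_sum_0_pos) simp
  have finite_sum: "moment_sum 0 y = (\<Sum>n\<le>D. \<beta> n * y ^ n)" for y
    unfolding moment_sum_def using assms(1) by (subst suminf_finite[of "{..D}"]) auto
  have poly_bound: "moment_sum 0 y \<le> C * y ^ D" if "y \<ge> 1" for y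
    unfolding finite_sum C_def sum_distrib_right
    using that \<beta>_nonneg by (intro sum_mono) (auto intro!: mult_left_mono power_increasing)
  have "((\<lambda>t. (ln C + D * ln c + D * ln t) / sqrt t) \<longlongrightarrow> 0) at_top"
    by real_asymp
  then have "eventually (\<lambda>t. (ln C + D * ln c + D * ln t) / sqrt t < \<delta> * sqrt (\<beta> d)) at_top"
    using assms d by (intro order_tendstoD) auto
  then show ?thesis
    using eventually_ge_at_top[of "max 1 (1 / c)"]
  proof eventually_elim
    case (elim t)
    then have t: "t \<ge> 1" "c * t \<ge> 1"
      using assms(2) by (auto simp: field_simps)
    have "ln (moment_sum 0 (c * t)) \<le> ln (C * (c * t) ^ D)"
      using poly_bound[OF t(2)] moment_sum_0_pos[of "c * t"] t by simp
    also have "\<dots> = ln C + D * ln c + D * ln t"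
      using C assms(2) t by (simp add: ln_mult ln_realpow algebra_simps)
    also have "\<dots> \<le> \<delta> * sqrt (\<beta> d) * sqrt t"
      using elim t by (simp add: divide_less_eq less_imp_le)
    also have "\<dots> \<le> \<delta> * sqrt (moment_sum 2 t)"
      using moment_sum_2_ge[OF d(1), of 1 t] t assms(3) d
      by (simp add: mult.assoc real_sqrt_mult[symmetric])
    finally show ?case .
  qed
qed

lemma ln_moment_sum_0_le_sqrt_var_transcendental:
  assumes "\<And>D. \<exists>n>D. \<beta> n > 0" "entire_order g < \<infinity>" "c > 0" "\<delta> > 0"
  shows "eventually (\<lambda>t. ln (moment_sum 0 (c * t)) \<le> \<delta> * sqrt (moment_sum 2 t)) at_top"
proof -
  obtain K where K: "eventually (\<lambda>r. ln (moment_sum 0 r) \<le> r ^ K) at_top"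
    using ln_moment_sum_0_le_power[OF assms(2)] by blast
  obtain n where n: "n > 2 * K" "\<beta> n > 0"
    using assms(1) by blast
  have "filterlim (\<lambda>t. c * t) at_top at_top"
    using filterlim_tendsto_pos_mult_at_top[OF tendsto_const assms(3) filterlim_ident] .
  then have "eventually (\<lambda>t. ln (moment_sum 0 (c * t)) \<le> (c * t) ^ K) at_top"
    by (rule eventually_compose_filterlim[OF K])
  moreover have "eventually (\<lambda>t. c ^ K / (\<delta> * sqrt (\<beta> n)) \<le> sqrt t) at_top"
    using sqrt_at_top by (simp add: filterlim_at_top)
  ultimately show ?thesis
    using eventually_ge_at_top[of 1]
  proof eventually_elim
    case (elim t)
    have "ln (moment_sum 0 (c * t)) \<le> c ^ K * t ^ K"
      using elim by (simp add: power_mult_distrib)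
    also have "\<dots> \<le> \<delta> * sqrt (\<beta> n) * sqrt t * t ^ K"
      using elim assms(4) n by (intro mult_right_mono) (auto simp: divide_le_eq mult.commute)
    also have "\<dots> = \<delta> * sqrt (\<beta> n * t ^ (2 * K + 1))"
      using elim by (simp add: real_sqrt_mult power_add power_mult real_sqrt_power)
    also have "\<dots> \<le> \<delta> * sqrt (moment_sum 2 t)"
      using moment_sum_2_ge[of n "2 * K + 1" t] elim n assms(4) by simp
    finally show ?case .
  qed
qed

lemma ln_moment_sum_0_le_sqrt_var:
  assumes "entire_order g < \<infinity>" "c > 0" "\<delta> > 0"
  shows "eventually (\<lambda>t. ln (moment_sum 0 (c * t)) \<le> \<delta> * sqrt (moment_sum 2 t)) at_top"
proof (cases "\<forall>D. \<exists>n>D. \<beta> n > 0")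
  case True
  then show ?thesis
    using ln_moment_sum_0_le_sqrt_var_transcendental assms by blast
next
  case False
  then obtain D where "\<not> \<beta> n > 0" if "n > D" for n
    by auto
  then have "\<beta> n = 0" if "n > D" for n
    using that \<beta>_nonneg[of n] by force
  then show ?thesis
    using ln_moment_sum_0_le_sqrt_var_polynomial assms by blast
qed

section \<open>Convergence of the moments\<close>

lemma cgf_remainder_le:
  assumes "t \<ge> 0" "sqrt (moment_sum 2 t) \<ge> 1" "\<epsilon> > 0"
  shows "cgf_remainder t \<le>
           \<epsilon> * exp \<epsilon> + exp (- (\<epsilon> * sqrt (moment_sum 2 t))) * moment_sum 0 (exp 5 * t)"
proof -
  define \<sigma> where "\<sigma> = sqrt (moment_sum 2 t)"
  have \<sigma>: "\<sigma> \<ge> 1" "\<sigma>\<^sup>2 = moment_sum 2 t"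
    using assms by (auto simp: \<sigma>_def)
  have sums_remainder:
    "(\<lambda>n. \<beta> n * t ^ n * (real n / \<sigma>) ^ 3 * exp (real n / \<sigma>)) sums cgf_remainder t"
    using summable_cgf_remainder[of t \<sigma>] assms \<sigma>
    by (simp add: cgf_remainder_def \<sigma>_def summable_sums)
  have sums_majorant: "(\<lambda>n. \<epsilon> * exp \<epsilon> / \<sigma>\<^sup>2 * (\<beta> n * t ^ n * real n ^ 2)
      + exp (- (\<epsilon> * \<sigma>)) * (\<beta> n * (exp 5 * t) ^ n * real n ^ 0))
      sums (\<epsilon> * exp \<epsilon> / \<sigma>\<^sup>2 * moment_sum 2 t + exp (- (\<epsilon> * \<sigma>)) * moment_sum 0 (exp 5 * t))"
    unfolding moment_sum_def using assms
    by (intro sums_add sums_mult summable_sums summable_moment_sum) auto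
  have term_le: "\<beta> n * t ^ n * (real n / \<sigma>) ^ 3 * exp (real n / \<sigma>)
      \<le> \<epsilon> * exp \<epsilon> / \<sigma>\<^sup>2 * (\<beta> n * t ^ n * real n ^ 2)
        + exp (- (\<epsilon> * \<sigma>)) * (\<beta> n * (exp 5 * t) ^ n * real n ^ 0)" for n
  proof -
    have "\<beta> n * t ^ n * ((real n / \<sigma>) ^ 3 * exp (real n / \<sigma>))
        \<le> \<beta> n * t ^ n * (\<epsilon> * exp \<epsilon> * (real n / \<sigma>) ^ 2 + exp (5 * real n - \<epsilon> * \<sigma>))"
      using cube_mult_exp_le[OF \<sigma>(1) assms(3)] \<beta>_nonneg[of n] assms(1)
      by (intro mult_left_mono) auto
    then show ?thesis
      by (simp add: algebra_simps power_divide power_mult_distrib exp_diff exp_minus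
          divide_inverse power_inverse flip: exp_of_nat_mult)
  qed
  have "cgf_remainder t
      \<le> \<epsilon> * exp \<epsilon> / \<sigma>\<^sup>2 * moment_sum 2 t + exp (- (\<epsilon> * \<sigma>)) * moment_sum 0 (exp 5 * t)"
    by (rule sums_le[OF term_le sums_remainder sums_majorant])
  then show ?thesis
    using \<sigma> by (simp add: \<sigma>_def)
qed

lemma cgf_remainder_nonneg:
  assumes "t \<ge> 0" "moment_sum 2 t > 0"
  shows "cgf_remainder t \<ge> 0"
  unfolding cgf_remainder_def using assms \<beta>_nonneg
  by (intro suminf_nonneg summable_cgf_remainder) auto

lemma eventually_cgf_remainder_le:
  assumes "entire_order g < \<infinity>" "\<epsilon> > 0"
  shows "eventually (\<lambda>t. cgf_remainder t \<le> \<epsilon> * exp \<epsilon> + exp (- (\<epsilon> / 2) * sqrt (moment_sum 2 t)))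
           at_top"
proof -
  have "eventually (\<lambda>t. ln (moment_sum 0 (exp 5 * t)) \<le> \<epsilon> / 2 * sqrt (moment_sum 2 t)) at_top"
    using assms by (intro ln_moment_sum_0_le_sqrt_var) auto
  moreover note eventually_sqrt_moment_sum_2_ge_1
  ultimately show ?thesis
    using eventually_gt_at_top[of 0]
  proof eventually_elim
    case (elim t)
    define \<sigma> where "\<sigma> = sqrt (moment_sum 2 t)"
    have "moment_sum 0 (exp 5 * t) = exp (ln (moment_sum 0 (exp 5 * t)))"
      using elim by (simp add: moment_sum_0_pos)
    also have "\<dots> \<le> exp (\<epsilon> / 2 * \<sigma>)"
      using elim by (simp add: \<sigma>_def)
    finally have "exp (- (\<epsilon> * \<sigma>)) * moment_sum 0 (exp 5 * t)
        \<le> exp (- (\<epsilon> * \<sigma>)) * exp (\<epsilon> / 2 * \<sigma>)"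
      by (rule mult_left_mono) simp
    also have "\<dots> = exp (- (\<epsilon> / 2) * \<sigma>)"
      by (simp flip: exp_add)
    finally have tail_le: "exp (- (\<epsilon> * \<sigma>)) * moment_sum 0 (exp 5 * t) \<le> exp (- (\<epsilon> / 2) * \<sigma>)" .
    have "cgf_remainder t \<le> \<epsilon> * exp \<epsilon> + exp (- (\<epsilon> * \<sigma>)) * moment_sum 0 (exp 5 * t)"
      unfolding \<sigma>_def using elim assms(2) by (intro cgf_remainder_le) auto
    with tail_le show ?case
      unfolding \<sigma>_def by linarith
  qed
qed

lemma cgf_remainder_tendsto_0:
  assumes "entire_order g < \<infinity>"
  shows "(cgf_remainder \<longlongrightarrow> 0) at_top"
proof (rule tendstoI)
  fix \<eta> :: real
  assume "\<eta> > 0"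
  define \<epsilon> where "\<epsilon> = min 1 (\<eta> / 4)"
  have \<epsilon>: "\<epsilon> > 0" "\<epsilon> \<le> 1" "\<epsilon> \<le> \<eta> / 4"
    using \<open>\<eta> > 0\<close> by (simp_all add: \<epsilon>_def)
  have "exp \<epsilon> \<le> 3"
    using exp_le \<epsilon>(2) by (meson exp_le_cancel_iff order_trans)
  then have \<epsilon>_exp_le: "\<epsilon> * exp \<epsilon> \<le> 3 * (\<eta> / 4)"
    using \<epsilon> mult_left_mono[of "exp \<epsilon>" 3 \<epsilon>] by linarith
  have "filterlim (\<lambda>t. - (\<epsilon> / 2) * sqrt (moment_sum 2 t)) at_bot at_top"
    by (rule filterlim_tendsto_neg_mult_at_bot[OF tendsto_const _ sqrt_moment_sum_2_at_top])
       (use \<epsilon>(1) in simp)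
  then have "((\<lambda>t. exp (- (\<epsilon> / 2) * sqrt (moment_sum 2 t))) \<longlongrightarrow> 0) at_top"
    by (rule filterlim_compose[OF exp_at_bot])
  then have "eventually (\<lambda>t. exp (- (\<epsilon> / 2) * sqrt (moment_sum 2 t)) < \<eta> / 4) at_top"
    using \<open>\<eta> > 0\<close> by (intro order_tendstoD) auto
  moreover note eventually_sqrt_moment_sum_2_ge_1
  ultimately show "eventually (\<lambda>t. dist (cgf_remainder t) 0 < \<eta>) at_top"
    using eventually_cgf_remainder_le[OF assms \<epsilon>(1)] eventually_ge_at_top[of 0]
  proof eventually_elim
    case (elim t)
    then have "0 \<le> cgf_remainder t"
      by (intro cgf_remainder_nonneg) auto
    with elim \<epsilon>_exp_le show ?case
      by simp
  qed
qed

lemma khinchin_norm_moment_tendsto: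
  assumes "entire_order g < \<infinity>"
  shows "((\<lambda>t. khinchin_norm_moment f t k) \<longlongrightarrow>
           integral\<^sup>L lborel (\<lambda>x. std_normal_density x * x ^ k)) at_top"
proof -
  define M where "M = integral\<^sup>L lborel (\<lambda>x. std_normal_density x * x ^ k)"
  define B where "B t = fact k * (exp (1 / 2) * (cgf_remainder t * exp (cgf_remainder t)))" for t
  have "(B \<longlongrightarrow> fact k * (exp (1 / 2) * (0 * exp 0))) at_top"
    unfolding B_def using cgf_remainder_tendsto_0[OF assms]
    by (intro tendsto_mult_left tendsto_mult tendsto_exp)
  then have B_tendsto: "(B \<longlongrightarrow> 0) at_top"
    by simp
  have bound: "eventually (\<lambda>t. norm (khinchin_norm_moment f t k - M) \<le> B t) at_top"
    using eventually_sqrt_moment_sum_2_ge_1 eventually_ge_at_top[of 0]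
  proof eventually_elim
    case (elim t)
    then have "moment_sum 2 t > 0"
      by (simp add: order_less_le_trans[OF zero_less_one])
    with elim(2) show ?case
      unfolding B_def M_def real_norm_def by (rule khinchin_norm_moment_error_le)
  qed
  have "((\<lambda>t. khinchin_norm_moment f t k - M) \<longlongrightarrow> 0) at_top"
    by (rule Lim_null_comparison[OF bound B_tendsto])
  then show ?thesis
    unfolding M_def by (rule LIM_zero_cancel)
qed

end

theorem proposition4p11:
  fixes g :: "complex \<Rightarrow> complex"
  assumes entire: "g holomorphic_on UNIV"
    and nonconst: "\<not> (\<exists>c. \<forall>z. g z = c)"
    and finite_order: "entire_order g < \<infinity>"
    and coeff_nonneg: "\<And>n. Im (taylor_coeff g n) = 0 \<and> Re (taylor_coeff g n) \<ge> 0"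
  shows "\<forall>m::nat. m \<ge> 1 \<longrightarrow>
    ((\<lambda>t. khinchin_norm_moment (\<lambda>z. exp (g z)) t m) \<longlongrightarrow>
       integral\<^sup>L lborel (\<lambda>x. std_normal_density x * x ^ m)) at_top"
proof -
  interpret nonneg_taylor_entire g
    using entire nonconst coeff_nonneg by unfold_locales
  show ?thesis
    using khinchin_norm_moment_tendsto[OF finite_order] by simp
qed

end
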